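(* Let $r=a/b$ with $a,b$ coprime positive integers. Then $I_r$ intertwines the left sub-Laplacian $\mathcal L$ with $\square_r=\mathcal L+rT^2$: $$I_r(\mathcal Lf)=\square_r(I_rf),\qquad f\in S(\overline{\mathbb{H}}).$$
   Context: $\mathbb{H}=\mathbb{C}\times\mathbb{R}$ (coordinates $z=x+iy$, $t$) with product $(x+iy,t)(u+iv,s)=(x+u+i(y+v),\,t+s+\tfrac12(xv-yu))$; $\overline{\mathbb{H}}=\mathbb{H}/\{(0,k\pi):k\in\mathbb{Z}\}\cong\mathbb{C}\times(\mathbb{R}/\pi\mathbb{Z})$, $S(\overline{\mathbb{H}})$ its Schwartz functions. For $r=a/b$, $\gamma_r(s)=(\sqrt r e^{is/\sqrt r},\tfrac12\sqrt r s)$ and $I_rf(z,t)=\int_0^{2\pi\sqrt{ab}}f((z,t)\gamma_r(s))\,ds$. The left-invariant vector fields are $X=\partial_x-\tfrac12y\partial_t$, $Y=\partial_y+\tfrac12x\partial_t$, $T=\partial_t$, and the left sub-Laplacian is $\mathcal L=-(X^2+Y^2)$. *)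

theory Defs
  imports "HOL-Analysis.Analysis"
begin

type_synonym heis = "complex \<times> real"

definition hmul :: "heis \<Rightarrow> heis \<Rightarrow> heis" where
  "hmul p q = (fst p + fst q,
     snd p + snd q + (Re (fst p) * Im (fst q) - Im (fst p) * Re (fst q)) / 2)"

definition gam :: "real \<Rightarrow> real \<Rightarrow> heis" where
  "gam r s = (complex_of_real (sqrt r) * cis (s / sqrt r), sqrt r * s / 2)"

definition Iop :: "nat \<Rightarrow> nat \<Rightarrow> (heis \<Rightarrow> complex) \<Rightarrow> heis \<Rightarrow> complex" where
  "Iop a b f p = integral {0 .. 2 * pi * sqrt (real a * real b)}
      (\<lambda>s. f (hmul p (gam (real a / real b) s)))"

definition pdx :: "(heis \<Rightarrow> complex) \<Rightarrow> heis \<Rightarrow> complex" where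
  "pdx f p = vector_derivative (\<lambda>u. f (Complex u (Im (fst p)), snd p)) (at (Re (fst p)))"

definition pdy :: "(heis \<Rightarrow> complex) \<Rightarrow> heis \<Rightarrow> complex" where
  "pdy f p = vector_derivative (\<lambda>v. f (Complex (Re (fst p)) v, snd p)) (at (Im (fst p)))"

definition pdt :: "(heis \<Rightarrow> complex) \<Rightarrow> heis \<Rightarrow> complex" where
  "pdt f p = vector_derivative (\<lambda>s. f (fst p, s)) (at (snd p))"

definition Xf :: "(heis \<Rightarrow> complex) \<Rightarrow> heis \<Rightarrow> complex" where
  "Xf f p = pdx f p - complex_of_real (Im (fst p) / 2) * pdt f p"

definition Yf :: "(heis \<Rightarrow> complex) \<Rightarrow> heis \<Rightarrow> complex" where
  "Yf f p = pdy f p + complex_of_real (Re (fst p) / 2) * pdt f p"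

definition Tf :: "(heis \<Rightarrow> complex) \<Rightarrow> heis \<Rightarrow> complex" where
  "Tf f = pdt f"

definition subLap :: "(heis \<Rightarrow> complex) \<Rightarrow> heis \<Rightarrow> complex" where
  "subLap f p = - (Xf (Xf f) p + Yf (Yf f) p)"

definition boxr :: "real \<Rightarrow> (heis \<Rightarrow> complex) \<Rightarrow> heis \<Rightarrow> complex" where
  "boxr r f p = subLap f p + complex_of_real r * Tf (Tf f) p"

definition pd1 :: "nat \<Rightarrow> (heis \<Rightarrow> complex) \<Rightarrow> heis \<Rightarrow> complex" where
  "pd1 i f = (if i = 0 then pdx f else if i = 1 then pdy f else pdt f)"

definition iterpd :: "nat list \<Rightarrow> (heis \<Rightarrow> complex) \<Rightarrow> heis \<Rightarrow> complex" where
  "iterpd ws f = foldr pd1 ws f"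

text \<open>Schwartz functions on Hbar = H / {(0, k pi)}: functions on H that are
  pi-periodic in t, smooth (all iterated partials are differentiable), and
  all of whose partial derivatives decay faster than any power of |z|
  (uniformly in t, which ranges over the compact circle R / pi Z).\<close>
definition schwartz_Hbar :: "(heis \<Rightarrow> complex) \<Rightarrow> bool" where
  "schwartz_Hbar f \<longleftrightarrow>
     (\<forall>z t. f (z, t + pi) = f (z, t)) \<and>
     (\<forall>ws. set ws \<subseteq> {0,1,2} \<longrightarrow> (\<forall>p. iterpd ws f differentiable (at p))) \<and>
     (\<forall>ws N. set ws \<subseteq> {0,1,2} \<longrightarrow>
        (\<exists>C. \<forall>z t. (1 + (cmod z)\<^sup>2) ^ N * cmod (iterpd ws f (z, t)) \<le> C))"

end

theory Submission
  imports Defs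
begin

text \<open>Right translation R_g q = q g by g = (w, c) commutes with T, but it moves X and Y by a
  central term: X (f o R_g) = (X f + Im w T f) o R_g and Y (f o R_g) = (Y f - Re w T f) o R_g.
  As T commutes with X and Y, this gives L (f o R_g) = (L f - 2 (Im w X T f - Re w Y T f)
  - |w|^2 T^2 f) o R_g. Along gamma_r we have |w|^2 = r, and s -> p gamma_r(s) is a horizontal
  curve with velocity -sin X + cos Y, so at p the integrand of box_r I_r f - I_r L f is
  2 sqrt r times the s-derivative of (T f)(p gamma_r(s)). Its integral over [0, 2 pi sqrt(ab)]
  vanishes: the endpoint of p gamma_r is its starting point shifted by (0, pi a), and f is
  pi-periodic in t.\<close>


section \<open>Smooth functions and partial derivatives\<close>

definition smooth :: "(heis \<Rightarrow> complex) \<Rightarrow> bool" where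
  "smooth h \<longleftrightarrow> (\<forall>ws. set ws \<subseteq> {0,1,2} \<longrightarrow> (\<forall>p. iterpd ws h differentiable (at p)))"

lemma smooth_pd1:
  assumes "smooth h" "i \<in> {0,1,2}"
  shows "smooth (pd1 i h)"
  unfolding smooth_def
proof (intro allI impI)
  fix ws :: "nat list" and p
  assume "set ws \<subseteq> {0,1,2}"
  with assms(2) have "set (ws @ [i]) \<subseteq> {0,1,2}" by auto
  then have "iterpd (ws @ [i]) h differentiable (at p)"
    using assms(1) unfolding smooth_def by blast
  then show "iterpd ws (pd1 i h) differentiable (at p)"
    by (simp add: iterpd_def)
qed

lemma smooth_pdx: "smooth h \<Longrightarrow> smooth (pdx h)"
  and smooth_pdy: "smooth h \<Longrightarrow> smooth (pdy h)"
  and smooth_pdt: "smooth h \<Longrightarrow> smooth (pdt h)"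
  using smooth_pd1[of h 0] smooth_pd1[of h 1] smooth_pd1[of h 2] by (simp_all add: pd1_def)

lemma smooth_differentiable: "smooth h \<Longrightarrow> h differentiable (at p)"
  unfolding smooth_def by (metis empty_set empty_subsetI foldr_Nil iterpd_def id_apply)

definition C1 :: "(heis \<Rightarrow> complex) \<Rightarrow> bool" where
  "C1 h \<longleftrightarrow> (\<forall>p. h differentiable (at p)) \<and> continuous_on UNIV (pdx h)
     \<and> continuous_on UNIV (pdy h) \<and> continuous_on UNIV (pdt h)"

lemma continuous_on_UNIV_differentiable: "(\<And>p. h differentiable (at p)) \<Longrightarrow> continuous_on UNIV h"
  by (simp add: differentiable_at_imp_differentiable_on differentiable_imp_continuous_on)

lemma C1_differentiable: "C1 h \<Longrightarrow> h differentiable (at p)"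
  unfolding C1_def by blast

lemma C1_continuous: "C1 h \<Longrightarrow> continuous_on UNIV h"
  by (simp add: C1_differentiable continuous_on_UNIV_differentiable)

lemma smooth_imp_C1: "smooth h \<Longrightarrow> C1 h"
  unfolding C1_def
  by (simp add: smooth_differentiable smooth_pdx smooth_pdy smooth_pdt continuous_on_UNIV_differentiable)

lemma has_vector_derivative_comp:
  assumes "(h has_derivative D) (at (c s))" "(c has_vector_derivative c') (at s)"
  shows "((\<lambda>s. h (c s)) has_vector_derivative D c') (at s)"
  using vector_derivative_diff_chain_within[of c c' s UNIV h D] assms
  by (simp add: comp_def has_derivative_at_withinI)

lemma pd_has_derivative:
  assumes "(h has_derivative D) (at p)"
  shows "pdx h p = D (1, 0)" "pdy h p = D (\<i>, 0)" "pdt h p = D (0, 1)"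
proof -
  obtain x y t where p: "p = (Complex x y, t)" by (metis complex.exhaust surj_pair)
  have D: "(h has_derivative D) (at (Complex x y, t))" using assms by (simp add: p)
  have "((\<lambda>u. (Complex u y, t)) has_vector_derivative (1, 0)) (at x)"
    "((\<lambda>v. (Complex x v, t)) has_vector_derivative (\<i>, 0)) (at y)"
    "((\<lambda>s. (Complex x y, s)) has_vector_derivative (0, 1)) (at t)"
    unfolding Complex_eq by (auto intro!: derivative_eq_intros)
  then have "((\<lambda>u. h (Complex u y, t)) has_vector_derivative D (1, 0)) (at x)"
    "((\<lambda>v. h (Complex x v, t)) has_vector_derivative D (\<i>, 0)) (at y)"
    "((\<lambda>s. h (Complex x y, s)) has_vector_derivative D (0, 1)) (at t)"
    by (auto intro!: has_vector_derivative_comp[where h = h] simp: D)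
  then show "pdx h p = D (1, 0)" "pdy h p = D (\<i>, 0)" "pdt h p = D (0, 1)"
    unfolding pdx_def pdy_def pdt_def p by (simp_all add: vector_derivative_at)
qed

lemma has_vector_derivative_comp_partials:
  assumes "h differentiable (at (c s))" "(c has_vector_derivative (Complex \<alpha> \<beta>, \<delta>)) (at s)"
  shows "((\<lambda>s. h (c s)) has_vector_derivative
     of_real \<alpha> * pdx h (c s) + of_real \<beta> * pdy h (c s) + of_real \<delta> * pdt h (c s)) (at s)"
proof -
  obtain D where D: "(h has_derivative D) (at (c s))"
    using assms(1) unfolding differentiable_def by blast
  interpret D: linear D using D has_derivative_linear by blast
  have "(Complex \<alpha> \<beta>, \<delta>) = \<alpha> *\<^sub>R (1, 0) + \<beta> *\<^sub>R (\<i>, 0) + \<delta> *\<^sub>R (0, 1)"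
    by (simp add: Complex_eq scaleR_complex.ctr)
  then have "D (Complex \<alpha> \<beta>, \<delta>) = \<alpha> *\<^sub>R D (1, 0) + \<beta> *\<^sub>R D (\<i>, 0) + \<delta> *\<^sub>R D (0, 1)"
    by (simp only: D.add D.scale)
  then show ?thesis
    using has_vector_derivative_comp[OF D assms(2)] pd_has_derivative[OF D]
    by (simp add: scaleR_conv_of_real)
qed

lemma has_vector_derivative_pdx:
  "h differentiable (at (Complex x y, t)) \<Longrightarrow>
   ((\<lambda>u. h (Complex u y, t)) has_vector_derivative pdx h (Complex x y, t)) (at x)"
  and has_vector_derivative_pdy:
  "h differentiable (at (Complex x y, t)) \<Longrightarrow>
   ((\<lambda>v. h (Complex x v, t)) has_vector_derivative pdy h (Complex x y, t)) (at y)"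
  and has_vector_derivative_pdt:
  "h differentiable (at (z, t)) \<Longrightarrow>
   ((\<lambda>s. h (z, s)) has_vector_derivative pdt h (z, t)) (at t)"
proof -
  have "((\<lambda>u. (Complex u y, t)) has_vector_derivative (Complex 1 0, 0)) (at x)"
    "((\<lambda>v. (Complex x v, t)) has_vector_derivative (Complex 0 1, 0)) (at y)"
    "((\<lambda>s. (z, s)) has_vector_derivative (Complex 0 0, 1)) (at t)"
    unfolding Complex_eq by (auto intro!: derivative_eq_intros)
  then show "h differentiable (at (Complex x y, t)) \<Longrightarrow>
      ((\<lambda>u. h (Complex u y, t)) has_vector_derivative pdx h (Complex x y, t)) (at x)"
    "h differentiable (at (Complex x y, t)) \<Longrightarrow>
      ((\<lambda>v. h (Complex x v, t)) has_vector_derivative pdy h (Complex x y, t)) (at y)"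
    "h differentiable (at (z, t)) \<Longrightarrow>
      ((\<lambda>s. h (z, s)) has_vector_derivative pdt h (z, t)) (at t)"
    using has_vector_derivative_comp_partials by fastforce+
qed

lemma pd_add:
  assumes "A differentiable (at p)" "B differentiable (at p)"
  shows "pdx (\<lambda>q. A q + B q) p = pdx A p + pdx B p"
    "pdy (\<lambda>q. A q + B q) p = pdy A p + pdy B p"
    "pdt (\<lambda>q. A q + B q) p = pdt A p + pdt B p"
proof -
  obtain DA DB where "(A has_derivative DA) (at p)" "(B has_derivative DB) (at p)"
    using assms unfolding differentiable_def by blast
  note D = this has_derivative_add[OF this]
  show "pdx (\<lambda>q. A q + B q) p = pdx A p + pdx B p"
    "pdy (\<lambda>q. A q + B q) p = pdy A p + pdy B p"
    "pdt (\<lambda>q. A q + B q) p = pdt A p + pdt B p"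
    using D[THEN pd_has_derivative(1)] D[THEN pd_has_derivative(2)] D[THEN pd_has_derivative(3)]
    by simp_all
qed

lemma pd_mult:
  assumes "A differentiable (at p)" "B differentiable (at p)"
  shows "pdx (\<lambda>q. A q * B q) p = pdx A p * B p + A p * pdx B p"
    "pdy (\<lambda>q. A q * B q) p = pdy A p * B p + A p * pdy B p"
    "pdt (\<lambda>q. A q * B q) p = pdt A p * B p + A p * pdt B p"
proof -
  obtain DA DB where "(A has_derivative DA) (at p)" "(B has_derivative DB) (at p)"
    using assms unfolding differentiable_def by blast
  note D = this has_derivative_mult[OF this]
  show "pdx (\<lambda>q. A q * B q) p = pdx A p * B p + A p * pdx B p"
    "pdy (\<lambda>q. A q * B q) p = pdy A p * B p + A p * pdy B p"
    "pdt (\<lambda>q. A q * B q) p = pdt A p * B p + A p * pdt B p"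
    using D[THEN pd_has_derivative(1)] D[THEN pd_has_derivative(2)] D[THEN pd_has_derivative(3)]
    by (simp_all add: algebra_simps)
qed

lemma pd_const: "pdx (\<lambda>q. k) p = 0" "pdy (\<lambda>q. k) p = 0" "pdt (\<lambda>q. k) p = 0"
  using pd_has_derivative[OF has_derivative_const[of k]] by simp_all

lemma pd_scale:
  assumes "A differentiable (at p)"
  shows "pdx (\<lambda>q. k * A q) p = k * pdx A p" "pdy (\<lambda>q. k * A q) p = k * pdy A p"
    "pdt (\<lambda>q. k * A q) p = k * pdt A p"
  using pd_mult[OF differentiable_const assms, of k] by (simp_all add: pd_const)

lemma differentiable_coordinate:
  "bounded_linear \<phi> \<Longrightarrow> (\<lambda>q. complex_of_real (\<phi> q)) differentiable (at p)"
  by (rule bounded_linear_imp_differentiable, rule bounded_linear_compose[OF bounded_linear_of_real])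

lemma continuous_on_pd_coordinate:
  assumes "bounded_linear \<phi>"
  shows "continuous_on UNIV (pdx (\<lambda>q. complex_of_real (\<phi> q)))"
    "continuous_on UNIV (pdy (\<lambda>q. complex_of_real (\<phi> q)))"
    "continuous_on UNIV (pdt (\<lambda>q. complex_of_real (\<phi> q)))"
proof -
  have "((\<lambda>q. complex_of_real (\<phi> q)) has_derivative (\<lambda>q. complex_of_real (\<phi> q))) (at p)" for p
    by (rule bounded_linear_imp_has_derivative,
        rule bounded_linear_compose[OF bounded_linear_of_real assms])
  from pd_has_derivative[OF this] show
    "continuous_on UNIV (pdx (\<lambda>q. complex_of_real (\<phi> q)))"
    "continuous_on UNIV (pdy (\<lambda>q. complex_of_real (\<phi> q)))"
    "continuous_on UNIV (pdt (\<lambda>q. complex_of_real (\<phi> q)))"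
    by simp_all
qed

lemma C1_add_coordinate_mult:
  assumes "C1 A" "C1 B" "bounded_linear \<phi>"
  shows "C1 (\<lambda>q. A q + complex_of_real (\<phi> q) * B q)"
proof -
  let ?c = "\<lambda>q. complex_of_real (\<phi> q)"
  have dA: "A differentiable (at p)" and dB: "B differentiable (at p)" for p
    using assms(1,2) by (simp_all add: C1_differentiable)
  have dc: "?c differentiable (at p)" for p
    by (rule differentiable_coordinate[OF assms(3)])
  have dcB: "(\<lambda>q. ?c q * B q) differentiable (at p)" for p
    by (rule differentiable_mult[OF dc dB])
  have c: "continuous_on UNIV ?c"
    by (rule linear_continuous_on[OF bounded_linear_compose[OF bounded_linear_of_real assms(3)]])
  have "pdx (\<lambda>q. A q + ?c q * B q) = (\<lambda>p. pdx A p + (pdx ?c p * B p + ?c p * pdx B p))"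
    "pdy (\<lambda>q. A q + ?c q * B q) = (\<lambda>p. pdy A p + (pdy ?c p * B p + ?c p * pdy B p))"
    "pdt (\<lambda>q. A q + ?c q * B q) = (\<lambda>p. pdt A p + (pdt ?c p * B p + ?c p * pdt B p))"
    by (simp_all only: fun_eq_iff pd_add[OF dA dcB] pd_mult[OF dc dB] simp_thms)
  moreover note continuous_on_pd_coordinate[OF assms(3)] C1_continuous[OF assms(2)]
    assms(1,2)[unfolded C1_def]
  ultimately show ?thesis
    unfolding C1_def
    by (intro conjI allI differentiable_add dA dcB; simp only:;
        intro continuous_on_add continuous_on_mult c; blast)
qed

section \<open>Symmetry of mixed partial derivatives\<close>

lemma continuous_on_compose_UNIV:
  "continuous_on UNIV F \<Longrightarrow> continuous_on S g \<Longrightarrow> continuous_on S (\<lambda>x. F (g x))"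
  by (rule continuous_on_compose2[of UNIV F S g]) auto

lemma mixed_partials_commute:
  fixes G Gu Gt Gut :: "real \<Rightarrow> real \<Rightarrow> 'a::banach"
  assumes Gu: "\<And>u \<tau>. ((\<lambda>u. G u \<tau>) has_vector_derivative Gu u \<tau>) (at u)"
    and Gt: "\<And>u \<tau>. ((\<lambda>\<tau>. G u \<tau>) has_vector_derivative Gt u \<tau>) (at \<tau>)"
    and Gut: "\<And>u \<tau>. ((\<lambda>u. Gt u \<tau>) has_vector_derivative Gut u \<tau>) (at u)"
    and cont: "continuous_on UNIV (\<lambda>(u, \<tau>). Gut u \<tau>)"
  shows "((\<lambda>\<tau>. Gu x \<tau>) has_vector_derivative Gut x t) (at t)"
proof -
  define a where "a = t - 1"
  have cont_x: "continuous_on S (Gut x)" for S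
    using continuous_on_compose2[OF cont, of S "\<lambda>\<tau>. (x, \<tau>)"]
      continuous_on_Pair[OF continuous_on_const continuous_on_id]
    by auto
  have FTC: "((Gt u) has_integral (G u \<tau> - G u a)) {a..\<tau>}" if "a \<le> \<tau>" for u \<tau>
    using that Gt by (intro fundamental_theorem_of_calculus) (auto intro: has_vector_derivative_at_within)
  have Leibniz:
    "((\<lambda>u. integral {a..\<tau>} (Gt u)) has_vector_derivative integral {a..\<tau>} (Gut x)) (at x)"
    if "a \<le> \<tau>" for \<tau>
  proof -
    have "(Gt u) integrable_on cbox a \<tau>" for u
      using FTC[OF that] by auto
    then show ?thesis
      using leibniz_rule_vector_derivative[of UNIV a \<tau> "\<lambda>u \<sigma>. Gt u \<sigma>" "\<lambda>u \<sigma>. Gut u \<sigma>"]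
        Gut continuous_on_subset[OF cont subset_UNIV]
      by (auto simp: has_vector_derivative_at_within)
  qed
  have Gu_integral: "Gu x \<tau> = Gu x a + integral {a..\<tau>} (Gut x)" if "a \<le> \<tau>" for \<tau>
  proof -
    have "(\<lambda>u. G u \<tau>) = (\<lambda>u. G u a + integral {a..\<tau>} (Gt u))"
      using FTC[OF that, THEN integral_unique] by (simp add: fun_eq_iff)
    then have "((\<lambda>u. G u \<tau>) has_vector_derivative Gu x a + integral {a..\<tau>} (Gut x)) (at x)"
      using has_vector_derivative_add[OF Gu Leibniz[OF that]] by simp
    then show ?thesis using Gu vector_derivative_unique_at by blast
  qed
  have "((\<lambda>\<tau>. integral {a..\<tau>} (Gut x)) has_vector_derivative Gut x t) (at t within {a..t + 1})"
    using cont_x by (intro integral_has_vector_derivative) (auto simp: a_def)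
  moreover have "at t within {a..t + 1} = at t"
    by (rule at_within_interior) (simp add: a_def)
  ultimately have "((\<lambda>\<tau>. Gu x a + integral {a..\<tau>} (Gut x)) has_vector_derivative Gut x t) (at t)"
    using has_vector_derivative_add[OF has_vector_derivative_const, of _ _ _ "Gu x a"] by simp
  then show ?thesis
  proof (rule has_vector_derivative_transform_within_open[of _ _ _ "{a<..}"])
    show "Gu x a + integral {a..\<tau>} (Gut x) = Gu x \<tau>" if "\<tau> \<in> {a<..}" for \<tau>
      using that Gu_integral[of \<tau>] by simp
  qed (auto simp: a_def)
qed

lemma pdt_pdx_commute:
  assumes "smooth h"
  shows "pdt (pdx h) p = pdx (pdt h) p"
proof -
  obtain x y t where p: "p = (Complex x y, t)" by (metis complex.exhaust surj_pair)
  have "continuous_on UNIV (pdx (pdt h))"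
    using smooth_imp_C1[OF smooth_pdx[OF smooth_pdt[OF assms]]] by (rule C1_continuous)
  then have "continuous_on UNIV (\<lambda>(u, \<tau>). pdx (pdt h) (Complex u y, \<tau>))"
    unfolding split_beta Complex_eq by (rule continuous_on_compose_UNIV) (intro continuous_intros)
  then have "((\<lambda>\<tau>. pdx h (Complex x y, \<tau>)) has_vector_derivative pdx (pdt h) (Complex x y, t)) (at t)"
    by (rule mixed_partials_commute[where G = "\<lambda>u \<tau>. h (Complex u y, \<tau>)", rotated 3])
       (auto intro: has_vector_derivative_pdx has_vector_derivative_pdt
         smooth_differentiable[OF assms] smooth_differentiable[OF smooth_pdt[OF assms]])
  then show ?thesis
    unfolding p pdt_def by (simp add: vector_derivative_at)
qed

lemma pdt_pdy_commute:
  assumes "smooth h"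
  shows "pdt (pdy h) p = pdy (pdt h) p"
proof -
  obtain x y t where p: "p = (Complex x y, t)" by (metis complex.exhaust surj_pair)
  have "continuous_on UNIV (pdy (pdt h))"
    using smooth_imp_C1[OF smooth_pdy[OF smooth_pdt[OF assms]]] by (rule C1_continuous)
  then have "continuous_on UNIV (\<lambda>(v, \<tau>). pdy (pdt h) (Complex x v, \<tau>))"
    unfolding split_beta Complex_eq by (rule continuous_on_compose_UNIV) (intro continuous_intros)
  then have "((\<lambda>\<tau>. pdy h (Complex x y, \<tau>)) has_vector_derivative pdy (pdt h) (Complex x y, t)) (at t)"
    by (rule mixed_partials_commute[where G = "\<lambda>v \<tau>. h (Complex x v, \<tau>)", rotated 3])
       (auto intro: has_vector_derivative_pdy has_vector_derivative_pdt
         smooth_differentiable[OF assms] smooth_differentiable[OF smooth_pdt[OF assms]])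
  then show ?thesis
    unfolding p pdt_def by (simp add: vector_derivative_at)
qed

section \<open>Left-invariant vector fields and right translations\<close>

lemma Tf_Xf_commute:
  assumes "smooth h"
  shows "Tf (Xf h) p = Xf (Tf h) p"
proof -
  obtain z t where p: "p = (z, t)" by fastforce
  have "((\<lambda>s. Xf h (z, s)) has_vector_derivative
      pdt (pdx h) (z, t) - of_real (Im z / 2) * pdt (pdt h) (z, t)) (at t)"
    unfolding Xf_def fst_conv
    by (intro has_vector_derivative_diff has_vector_derivative_mult_right has_vector_derivative_pdt
        smooth_differentiable[OF smooth_pdx[OF assms]] smooth_differentiable[OF smooth_pdt[OF assms]])
  then show ?thesis
    unfolding p Tf_def pdt_def[of "Xf h"] Xf_def[of "pdt h"]
    by (simp add: vector_derivative_at pdt_pdx_commute[OF assms])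
qed

lemma Tf_Yf_commute:
  assumes "smooth h"
  shows "Tf (Yf h) p = Yf (Tf h) p"
proof -
  obtain z t where p: "p = (z, t)" by fastforce
  have "((\<lambda>s. Yf h (z, s)) has_vector_derivative
      pdt (pdy h) (z, t) + of_real (Re z / 2) * pdt (pdt h) (z, t)) (at t)"
    unfolding Yf_def fst_conv
    by (intro has_vector_derivative_add has_vector_derivative_mult_right has_vector_derivative_pdt
        smooth_differentiable[OF smooth_pdy[OF assms]] smooth_differentiable[OF smooth_pdt[OF assms]])
  then show ?thesis
    unfolding p Tf_def pdt_def[of "Yf h"] Yf_def[of "pdt h"]
    by (simp add: vector_derivative_at pdt_pdy_commute[OF assms])
qed

lemma left_invariant_fields_add_scale:
  assumes "A differentiable (at p)" "B differentiable (at p)"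
  shows "Xf (\<lambda>q. A q + k * B q) p = Xf A p + k * Xf B p"
    "Yf (\<lambda>q. A q + k * B q) p = Yf A p + k * Yf B p"
    "Tf (\<lambda>q. A q + k * B q) p = Tf A p + k * Tf B p"
  using pd_add[OF assms(1) differentiable_mult[OF differentiable_const assms(2)], of k]
    pd_scale[OF assms(2), of k]
  by (simp_all add: Xf_def Yf_def Tf_def algebra_simps)

lemma C1_Xf: "smooth h \<Longrightarrow> C1 (Xf h)"
  and C1_Yf: "smooth h \<Longrightarrow> C1 (Yf h)"
  and C1_Tf: "smooth h \<Longrightarrow> C1 (Tf h)"
proof -
  assume h: "smooth h"
  have Xf_eq: "Xf h = (\<lambda>q. pdx h q + of_real (- Im (fst q) / 2) * pdt h q)"
    and Yf_eq: "Yf h = (\<lambda>q. pdy h q + of_real (Re (fst q) / 2) * pdt h q)"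
    by (simp_all add: fun_eq_iff Xf_def Yf_def)
  have bl: "bounded_linear (\<lambda>q::heis. - Im (fst q) / 2)"
    "bounded_linear (\<lambda>q::heis. Re (fst q) / 2)"
    by (simp_all flip: linear_conv_bounded_linear add: linear_iff algebra_simps)
  note C1_pd = smooth_imp_C1[OF smooth_pdx[OF h]] smooth_imp_C1[OF smooth_pdy[OF h]]
    smooth_imp_C1[OF smooth_pdt[OF h]]
  show "C1 (Xf h)" "C1 (Yf h)"
    unfolding Xf_eq Yf_eq
    by (rule C1_add_coordinate_mult[OF C1_pd(1) C1_pd(3) bl(1)],
        rule C1_add_coordinate_mult[OF C1_pd(2) C1_pd(3) bl(2)])
  show "C1 (Tf h)"
    using h by (simp add: Tf_def smooth_imp_C1 smooth_pdt)
qed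

lemma continuous_Xf: "C1 h \<Longrightarrow> continuous_on UNIV (Xf h)"
  and continuous_Yf: "C1 h \<Longrightarrow> continuous_on UNIV (Yf h)"
  unfolding C1_def Xf_def Yf_def by (auto intro!: continuous_intros)

lemma continuous_subLap: "smooth f \<Longrightarrow> continuous_on UNIV (subLap f)"
  unfolding subLap_def[abs_def]
  by (intro continuous_intros continuous_Xf continuous_Yf C1_Xf C1_Yf)

lemma fst_hmul: "fst (hmul p q) = fst p + fst q"
  by (simp add: hmul_def)

lemma continuous_on_hmul [continuous_intros]:
  "continuous_on S f \<Longrightarrow> continuous_on S g \<Longrightarrow> continuous_on S (\<lambda>x. hmul (f x) (g x))"
  unfolding hmul_def by (intro continuous_intros) auto

lemma differentiable_right_translate:
  "h differentiable (at (hmul q g)) \<Longrightarrow> (\<lambda>q. h (hmul q g)) differentiable (at q)"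
proof -
  have "(\<lambda>q. hmul q g) differentiable (at q)"
    unfolding hmul_def differentiable_def
    by (rule exI[of _ "\<lambda>d. (fst d, snd d + (Re (fst d) * Im (fst g) - Im (fst d) * Re (fst g)) / 2)"])
       (auto intro!: derivative_eq_intros)
  then show "h differentiable (at (hmul q g)) \<Longrightarrow> (\<lambda>q. h (hmul q g)) differentiable (at q)"
    using differentiable_chain_at[of "\<lambda>q. hmul q g" q h] by (simp add: o_def)
qed

lemma pd_right_translate:
  assumes "h differentiable (at (hmul q g))"
  shows "pdx (\<lambda>q. h (hmul q g)) q = pdx h (hmul q g) + of_real (Im (fst g) / 2) * pdt h (hmul q g)"
    "pdy (\<lambda>q. h (hmul q g)) q = pdy h (hmul q g) - of_real (Re (fst g) / 2) * pdt h (hmul q g)"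
    "pdt (\<lambda>q. h (hmul q g)) q = pdt h (hmul q g)"
proof -
  obtain x y t where q: "q = (Complex x y, t)" by (metis complex.exhaust surj_pair)
  have "((\<lambda>u. hmul (Complex u y, t) g) has_vector_derivative (Complex 1 0, Im (fst g) / 2)) (at x)"
    "((\<lambda>v. hmul (Complex x v, t) g) has_vector_derivative (Complex 0 1, - Re (fst g) / 2)) (at y)"
    "((\<lambda>s. hmul (Complex x y, s) g) has_vector_derivative (Complex 0 0, 1)) (at t)"
    unfolding hmul_def Complex_eq by (auto intro!: derivative_eq_intros)
  from this[THEN has_vector_derivative_comp_partials[rotated]] assms
  show "pdx (\<lambda>q. h (hmul q g)) q = pdx h (hmul q g) + of_real (Im (fst g) / 2) * pdt h (hmul q g)"
    "pdy (\<lambda>q. h (hmul q g)) q = pdy h (hmul q g) - of_real (Re (fst g) / 2) * pdt h (hmul q g)"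
    "pdt (\<lambda>q. h (hmul q g)) q = pdt h (hmul q g)"
    unfolding q pdx_def pdy_def pdt_def by (auto simp: vector_derivative_at)
qed

lemma left_invariant_fields_right_translate:
  assumes "h differentiable (at (hmul q g))"
  shows "Xf (\<lambda>q. h (hmul q g)) q = Xf h (hmul q g) + of_real (Im (fst g)) * Tf h (hmul q g)"
    "Yf (\<lambda>q. h (hmul q g)) q = Yf h (hmul q g) - of_real (Re (fst g)) * Tf h (hmul q g)"
    "Tf (\<lambda>q. h (hmul q g)) q = Tf h (hmul q g)"
  unfolding Xf_def Yf_def Tf_def pd_right_translate[OF assms] fst_hmul
  by (simp_all add: field_simps)

lemma boxr_right_translate:
  assumes f: "smooth f"
  shows "boxr ((cmod (fst g))\<^sup>2) (\<lambda>q. f (hmul q g)) p =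
    subLap f (hmul p g)
    - 2 * (of_real (Im (fst g)) * Xf (Tf f) (hmul p g) - of_real (Re (fst g)) * Yf (Tf f) (hmul p g))"
proof -
  let ?v = "complex_of_real (Im (fst g))" and ?u = "complex_of_real (Re (fst g))"
  note d = C1_differentiable
  have dR: "(\<lambda>q. k (hmul q g)) differentiable (at q)" if "C1 k" for k q
    by (rule differentiable_right_translate[OF d[OF that]])
  note C1s = smooth_imp_C1[OF f] C1_Xf[OF f] C1_Yf[OF f] C1_Tf[OF f]
  note R = left_invariant_fields_right_translate[OF d[OF C1s(2)]]
    left_invariant_fields_right_translate[OF d[OF C1s(3)]]
    left_invariant_fields_right_translate[OF d[OF C1s(4)]]
  have "Xf (\<lambda>q. f (hmul q g)) = (\<lambda>q. Xf f (hmul q g) + ?v * Tf f (hmul q g))"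
    "Yf (\<lambda>q. f (hmul q g)) = (\<lambda>q. Yf f (hmul q g) + (- ?u) * Tf f (hmul q g))"
    "Tf (\<lambda>q. f (hmul q g)) = (\<lambda>q. Tf f (hmul q g))"
    using left_invariant_fields_right_translate[OF d[OF C1s(1)]] by (simp_all add: fun_eq_iff)
  then have "Xf (Xf (\<lambda>q. f (hmul q g))) p
      = Xf (Xf f) (hmul p g) + ?v * Tf (Xf f) (hmul p g)
        + ?v * (Xf (Tf f) (hmul p g) + ?v * Tf (Tf f) (hmul p g))"
    "Yf (Yf (\<lambda>q. f (hmul q g))) p
      = Yf (Yf f) (hmul p g) - ?u * Tf (Yf f) (hmul p g)
        + (- ?u) * (Yf (Tf f) (hmul p g) - ?u * Tf (Tf f) (hmul p g))"
    "Tf (Tf (\<lambda>q. f (hmul q g))) p = Tf (Tf f) (hmul p g)"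
    by (simp_all only: left_invariant_fields_add_scale[OF dR dR] C1s R)
  then show ?thesis
    unfolding boxr_def subLap_def Tf_Xf_commute[OF f] Tf_Yf_commute[OF f] cmod_power2
    by (simp add: algebra_simps power2_eq_square)
qed

section \<open>Differentiation under the integral sign\<close>

definition C1_family :: "(heis \<Rightarrow> real \<Rightarrow> complex) \<Rightarrow> bool" where
  "C1_family H \<longleftrightarrow> (\<forall>s p. (\<lambda>q. H q s) differentiable (at p))
     \<and> continuous_on UNIV (\<lambda>(p, s). H p s)
     \<and> continuous_on UNIV (\<lambda>(p, s). pdx (\<lambda>q. H q s) p)
     \<and> continuous_on UNIV (\<lambda>(p, s). pdy (\<lambda>q. H q s) p)
     \<and> continuous_on UNIV (\<lambda>(p, s). pdt (\<lambda>q. H q s) p)"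

lemma continuous_on_slice:
  "continuous_on UNIV (\<lambda>(p, s). K p s) \<Longrightarrow> continuous_on S (K p)"
  using continuous_on_compose_UNIV[of "\<lambda>(p, s). K p s" S "\<lambda>s. (p, s)"]
  by (simp add: continuous_on_Pair[OF continuous_on_const continuous_on_id])

lemma has_vector_derivative_parametric_integral:
  fixes H D :: "heis \<Rightarrow> real \<Rightarrow> complex"
  assumes H: "continuous_on UNIV (\<lambda>(p, s). H p s)"
    and D: "continuous_on UNIV (\<lambda>(p, s). D p s)"
    and \<gamma>: "continuous_on UNIV \<gamma>"
    and deriv: "\<And>u s. ((\<lambda>u. H (\<gamma> u) s) has_vector_derivative D (\<gamma> u) s) (at u)"
  shows "((\<lambda>u. integral {a..b} (H (\<gamma> u))) has_vector_derivative integral {a..b} (D (\<gamma> x))) (at x)"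
proof -
  have "continuous_on UNIV (\<lambda>z. (\<gamma> (fst z), snd z))"
    by (intro continuous_intros continuous_on_compose_UNIV[OF \<gamma>])
  from continuous_on_compose_UNIV[OF D this]
  have "continuous_on UNIV (\<lambda>(u, s). D (\<gamma> u) s)"
    by (simp add: split_beta)
  moreover have "H (\<gamma> u) integrable_on cbox a b" for u
    by (rule integrable_continuous, rule continuous_on_slice[OF H])
  ultimately show ?thesis
    using leibniz_rule_vector_derivative[of UNIV a b "\<lambda>u s. H (\<gamma> u) s" "\<lambda>u s. D (\<gamma> u) s" x]
      deriv continuous_on_subset
    by (fastforce simp: has_vector_derivative_at_within)
qed

lemma pd_integral:
  assumes "C1_family H"
  shows "pdx (\<lambda>q. integral {a..b} (H q)) p = integral {a..b} (\<lambda>s. pdx (\<lambda>q. H q s) p)"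
    "pdy (\<lambda>q. integral {a..b} (H q)) p = integral {a..b} (\<lambda>s. pdy (\<lambda>q. H q s) p)"
    "pdt (\<lambda>q. integral {a..b} (H q)) p = integral {a..b} (\<lambda>s. pdt (\<lambda>q. H q s) p)"
proof -
  obtain x y t where p: "p = (Complex x y, t)" by (metis complex.exhaust surj_pair)
  note H = assms[unfolded C1_family_def]
  have lines: "continuous_on UNIV (\<lambda>u. (Complex u y, t))"
    "continuous_on UNIV (\<lambda>v. (Complex x v, t))" "continuous_on UNIV (\<lambda>s. (Complex x y, s))"
    unfolding Complex_eq by (intro continuous_intros)+
  have "((\<lambda>u. integral {a..b} (H (Complex u y, t))) has_vector_derivative
      integral {a..b} (\<lambda>s. pdx (\<lambda>q. H q s) (Complex x y, t))) (at x)"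
    "((\<lambda>v. integral {a..b} (H (Complex x v, t))) has_vector_derivative
      integral {a..b} (\<lambda>s. pdy (\<lambda>q. H q s) (Complex x y, t))) (at y)"
    "((\<lambda>\<tau>. integral {a..b} (H (Complex x y, \<tau>))) has_vector_derivative
      integral {a..b} (\<lambda>s. pdt (\<lambda>q. H q s) (Complex x y, t))) (at t)"
    using H
    by (auto intro!: has_vector_derivative_parametric_integral[OF _ _ lines(1)]
        has_vector_derivative_parametric_integral[OF _ _ lines(2)]
        has_vector_derivative_parametric_integral[OF _ _ lines(3)]
        has_vector_derivative_pdx has_vector_derivative_pdy has_vector_derivative_pdt)
  then show "pdx (\<lambda>q. integral {a..b} (H q)) p = integral {a..b} (\<lambda>s. pdx (\<lambda>q. H q s) p)"
    "pdy (\<lambda>q. integral {a..b} (H q)) p = integral {a..b} (\<lambda>s. pdy (\<lambda>q. H q s) p)"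
    "pdt (\<lambda>q. integral {a..b} (H q)) p = integral {a..b} (\<lambda>s. pdt (\<lambda>q. H q s) p)"
    unfolding p pdx_def pdy_def pdt_def by (simp_all add: vector_derivative_at)
qed

lemma continuous_on_pd_slice:
  assumes "C1_family H"
  shows "continuous_on S (\<lambda>s. pdx (\<lambda>q. H q s) p)"
    "continuous_on S (\<lambda>s. pdy (\<lambda>q. H q s) p)" "continuous_on S (\<lambda>s. pdt (\<lambda>q. H q s) p)"
  using assms continuous_on_slice[of "\<lambda>p s. pdx (\<lambda>q. H q s) p" S p]
    continuous_on_slice[of "\<lambda>p s. pdy (\<lambda>q. H q s) p" S p]
    continuous_on_slice[of "\<lambda>p s. pdt (\<lambda>q. H q s) p" S p]
  unfolding C1_family_def by blast+

lemma continuous_on_left_invariant_fields_slice: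
  assumes "C1_family H"
  shows "continuous_on S (\<lambda>s. Xf (\<lambda>q. H q s) p)"
    "continuous_on S (\<lambda>s. Yf (\<lambda>q. H q s) p)" "continuous_on S (\<lambda>s. Tf (\<lambda>q. H q s) p)"
  unfolding Xf_def Yf_def Tf_def by (intro continuous_intros continuous_on_pd_slice[OF assms])+

lemma left_invariant_fields_integral:
  assumes "C1_family H"
  shows "Xf (\<lambda>q. integral {a..b} (H q)) p = integral {a..b} (\<lambda>s. Xf (\<lambda>q. H q s) p)"
    "Yf (\<lambda>q. integral {a..b} (H q)) p = integral {a..b} (\<lambda>s. Yf (\<lambda>q. H q s) p)"
    "Tf (\<lambda>q. integral {a..b} (H q)) p = integral {a..b} (\<lambda>s. Tf (\<lambda>q. H q s) p)"
proof -
  note integrable = continuous_on_pd_slice[OF assms, THEN integrable_continuous_interval]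
  show "Xf (\<lambda>q. integral {a..b} (H q)) p = integral {a..b} (\<lambda>s. Xf (\<lambda>q. H q s) p)"
    "Yf (\<lambda>q. integral {a..b} (H q)) p = integral {a..b} (\<lambda>s. Yf (\<lambda>q. H q s) p)"
    "Tf (\<lambda>q. integral {a..b} (H q)) p = integral {a..b} (\<lambda>s. Tf (\<lambda>q. H q s) p)"
    unfolding Xf_def Yf_def Tf_def pd_integral[OF assms]
    by (simp_all only: integral_diff[OF integrable(1) integrable_on_mult_right[OF integrable(3)]]
        integral_add[OF integrable(2) integrable_on_mult_right[OF integrable(3)]] integral_mult_right)
qed

lemma boxr_integral:
  assumes H: "C1_family H"
    and XH: "C1_family (\<lambda>q s. Xf (\<lambda>q. H q s) q)"
    and YH: "C1_family (\<lambda>q s. Yf (\<lambda>q. H q s) q)"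
    and TH: "C1_family (\<lambda>q s. Tf (\<lambda>q. H q s) q)"
  shows "boxr r (\<lambda>q. integral {a..b} (H q)) p = integral {a..b} (\<lambda>s. boxr r (\<lambda>q. H q s) p)"
proof -
  have "Xf (\<lambda>q. integral {a..b} (H q)) = (\<lambda>q. integral {a..b} (\<lambda>s. Xf (\<lambda>q. H q s) q))"
    "Yf (\<lambda>q. integral {a..b} (H q)) = (\<lambda>q. integral {a..b} (\<lambda>s. Yf (\<lambda>q. H q s) q))"
    "Tf (\<lambda>q. integral {a..b} (H q)) = (\<lambda>q. integral {a..b} (\<lambda>s. Tf (\<lambda>q. H q s) q))"
    by (simp_all add: fun_eq_iff left_invariant_fields_integral[OF H])
  then have "boxr r (\<lambda>q. integral {a..b} (H q)) p
      = - (integral {a..b} (\<lambda>s. Xf (Xf (\<lambda>q. H q s)) p)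
           + integral {a..b} (\<lambda>s. Yf (Yf (\<lambda>q. H q s)) p))
        + of_real r * integral {a..b} (\<lambda>s. Tf (Tf (\<lambda>q. H q s)) p)"
    using left_invariant_fields_integral(1)[OF XH] left_invariant_fields_integral(2)[OF YH]
      left_invariant_fields_integral(3)[OF TH]
    by (simp add: boxr_def subLap_def)
  also have "\<dots> = integral {a..b} (\<lambda>s. boxr r (\<lambda>q. H q s) p)"
  proof -
    note integrable = continuous_on_left_invariant_fields_slice(1)[OF XH]
      continuous_on_left_invariant_fields_slice(2)[OF YH]
      continuous_on_left_invariant_fields_slice(3)[OF TH]
    note integrable = integrable[THEN integrable_continuous_interval]
    show ?thesis
      unfolding boxr_def subLap_def
      by (simp only: integral_add[OF integrable_neg[OF integrable_add[OF integrable(1,2)]]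
          integrable_on_mult_right[OF integrable(3)]] integral_neg integral_add[OF integrable(1,2)]
          integral_mult_right)
  qed
  finally show ?thesis .
qed

lemma C1_family_add:
  assumes "C1_family H" "C1_family K"
  shows "C1_family (\<lambda>q s. H q s + K q s)"
proof -
  note H = assms(1)[unfolded C1_family_def] and K = assms(2)[unfolded C1_family_def]
  have "pdx (\<lambda>q. H q s + K q s) p = pdx (\<lambda>q. H q s) p + pdx (\<lambda>q. K q s) p"
    "pdy (\<lambda>q. H q s + K q s) p = pdy (\<lambda>q. H q s) p + pdy (\<lambda>q. K q s) p"
    "pdt (\<lambda>q. H q s + K q s) p = pdt (\<lambda>q. H q s) p + pdt (\<lambda>q. K q s) p" for p s
    using H K by (simp_all only: pd_add)
  with H K show ?thesis
    unfolding C1_family_def split_beta by (auto intro!: continuous_intros differentiable_add)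
qed

lemma C1_family_scale:
  assumes "continuous_on UNIV c" "C1_family H"
  shows "C1_family (\<lambda>q s. c s * H q s)"
proof -
  note H = assms(2)[unfolded C1_family_def]
  have "pdx (\<lambda>q. c s * H q s) p = c s * pdx (\<lambda>q. H q s) p"
    "pdy (\<lambda>q. c s * H q s) p = c s * pdy (\<lambda>q. H q s) p"
    "pdt (\<lambda>q. c s * H q s) p = c s * pdt (\<lambda>q. H q s) p" for p s
    using H by (simp_all only: pd_scale)
  moreover have "continuous_on UNIV (\<lambda>z::heis \<times> real. c (snd z))"
    by (intro continuous_on_compose_UNIV[OF assms(1)] continuous_intros)
  ultimately show ?thesis
    using H unfolding C1_family_def split_beta by (auto intro!: continuous_intros differentiable_mult)
qed

lemma C1_family_right_translate:
  assumes h: "C1 h" and g: "continuous_on UNIV g"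
  shows "C1_family (\<lambda>q s. h (hmul q (g s)))"
proof -
  note h' = h[unfolded C1_def]
  have cg: "continuous_on UNIV (\<lambda>z::heis \<times> real. g (snd z))"
    by (intro continuous_on_compose_UNIV[OF g] continuous_intros)
  have cR: "continuous_on UNIV (\<lambda>z::heis \<times> real. k (hmul (fst z) (g (snd z))))"
    if "continuous_on UNIV k" for k
    by (intro continuous_on_compose_UNIV[OF that] continuous_intros cg)
  note dh = C1_differentiable[OF h]
  show ?thesis
    unfolding C1_family_def split_beta pd_right_translate[OF dh]
    using h' C1_continuous[OF h]
    by (auto intro!: differentiable_right_translate dh cR continuous_intros cg)
qed

lemma C1_family_right_translates:
  assumes f: "smooth f" and g: "continuous_on UNIV g"
  shows "C1_family (\<lambda>q s. f (hmul q (g s)))"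
    "C1_family (\<lambda>q s. Xf (\<lambda>q. f (hmul q (g s))) q)"
    "C1_family (\<lambda>q s. Yf (\<lambda>q. f (hmul q (g s))) q)"
    "C1_family (\<lambda>q s. Tf (\<lambda>q. f (hmul q (g s))) q)"
proof -
  note R = left_invariant_fields_right_translate[OF smooth_differentiable[OF f]]
  note translates = C1_family_right_translate[OF _ g]
  have "(\<lambda>q s. Xf (\<lambda>q. f (hmul q (g s))) q)
      = (\<lambda>q s. Xf f (hmul q (g s)) + of_real (Im (fst (g s))) * Tf f (hmul q (g s)))"
    "(\<lambda>q s. Yf (\<lambda>q. f (hmul q (g s))) q)
      = (\<lambda>q s. Yf f (hmul q (g s)) + of_real (- Re (fst (g s))) * Tf f (hmul q (g s)))"
    "(\<lambda>q s. Tf (\<lambda>q. f (hmul q (g s))) q) = (\<lambda>q s. Tf f (hmul q (g s)))"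
    by (simp_all add: fun_eq_iff R)
  moreover have "continuous_on UNIV (\<lambda>s. complex_of_real (Im (fst (g s))))"
    "continuous_on UNIV (\<lambda>s. complex_of_real (- Re (fst (g s))))"
    by (intro continuous_intros g)+
  ultimately show "C1_family (\<lambda>q s. f (hmul q (g s)))"
    "C1_family (\<lambda>q s. Xf (\<lambda>q. f (hmul q (g s))) q)"
    "C1_family (\<lambda>q s. Yf (\<lambda>q. f (hmul q (g s))) q)"
    "C1_family (\<lambda>q s. Tf (\<lambda>q. f (hmul q (g s))) q)"
    by (simp_all only: translates smooth_imp_C1 f C1_Xf C1_Yf C1_Tf C1_family_add C1_family_scale)
qed

section \<open>The orbits of gamma_r\<close>

lemma has_vector_derivative_horizontal:
  assumes "h differentiable (at (c s))"
    and "(c has_vector_derivative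
      (Complex \<alpha> \<beta>, (\<beta> * Re (fst (c s)) - \<alpha> * Im (fst (c s))) / 2)) (at s)"
  shows "((\<lambda>s. h (c s)) has_vector_derivative
    of_real \<alpha> * Xf h (c s) + of_real \<beta> * Yf h (c s)) (at s)"
proof -
  have "of_real \<alpha> * pdx h (c s) + of_real \<beta> * pdy h (c s)
      + of_real ((\<beta> * Re (fst (c s)) - \<alpha> * Im (fst (c s))) / 2) * pdt h (c s)
      = of_real \<alpha> * Xf h (c s) + of_real \<beta> * Yf h (c s)"
    by (simp add: Xf_def Yf_def field_simps)
  then show ?thesis
    using has_vector_derivative_comp_partials[OF assms] by simp
qed

lemma continuous_on_gam: "continuous_on S (gam r)"
  unfolding gam_def cis_conv_exp divide_inverse by (intro continuous_intros)

lemma fst_gam: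
  "Re (fst (gam r s)) = sqrt r * cos (s / sqrt r)" "Im (fst (gam r s)) = sqrt r * sin (s / sqrt r)"
  by (simp_all add: gam_def)

lemma has_vector_derivative_Complex:
  assumes "(f has_real_derivative f') (at s)" "(g has_real_derivative g') (at s)"
  shows "((\<lambda>s. Complex (f s) (g s)) has_vector_derivative Complex f' g') (at s)"
  unfolding Complex_eq
  using has_vector_derivative_add[OF has_vector_derivative_of_real[OF assms(1)]
      has_vector_derivative_mult_right[OF has_vector_derivative_of_real[OF assms(2)], of \<i>]] .

lemma right_translate_gam_horizontal:
  assumes r: "r > 0"
  shows "((\<lambda>s. hmul p (gam r s)) has_vector_derivative
    (Complex (- sin (s / sqrt r)) (cos (s / sqrt r)),
     (cos (s / sqrt r) * Re (fst (hmul p (gam r s)))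
      - - sin (s / sqrt r) * Im (fst (hmul p (gam r s)))) / 2)) (at s)"
proof -
  let ?c = "cos (s / sqrt r)" and ?s = "sin (s / sqrt r)"
  have sr: "sqrt r * sqrt r = r" "sqrt r * (sqrt r * x) = r * x" "sqrt r > 0" for x
    using r by (simp_all flip: mult.assoc)
  have "?c * Re (fst (hmul p (gam r s))) - - ?s * Im (fst (hmul p (gam r s)))
      = Re (fst p) * ?c + Im (fst p) * ?s + sqrt r * (?c * ?c + ?s * ?s)"
    by (simp add: fst_hmul fst_gam algebra_simps del: sin_cos_squared_add3)
  note tcoord = this[unfolded sin_cos_squared_add3 mult_1_right]
  have "(\<lambda>s. hmul p (gam r s))
      = (\<lambda>s. (Complex (Re (fst p) + sqrt r * cos (s / sqrt r)) (Im (fst p) + sqrt r * sin (s / sqrt r)),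
          snd p + sqrt r * s / 2
          + (Re (fst p) * (sqrt r * sin (s / sqrt r)) - Im (fst p) * (sqrt r * cos (s / sqrt r))) / 2))"
    by (simp add: fun_eq_iff hmul_def gam_def complex_eq_iff)
  moreover have "((\<lambda>s. Re (fst p) + sqrt r * cos (s / sqrt r)) has_real_derivative - ?s) (at s)"
    "((\<lambda>s. Im (fst p) + sqrt r * sin (s / sqrt r)) has_real_derivative ?c) (at s)"
    using sr by (auto intro!: derivative_eq_intros simp: field_simps)
  then have "((\<lambda>s. Complex (Re (fst p) + sqrt r * cos (s / sqrt r)) (Im (fst p) + sqrt r * sin (s / sqrt r)))
      has_vector_derivative Complex (- ?s) ?c) (at s)"
    by (rule has_vector_derivative_Complex)
  moreover have "((\<lambda>s. snd p + sqrt r * s / 2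
        + (Re (fst p) * (sqrt r * sin (s / sqrt r)) - Im (fst p) * (sqrt r * cos (s / sqrt r))) / 2)
      has_real_derivative (sqrt r / 2 + (Re (fst p) * ?c + Im (fst p) * ?s) / 2)) (at s)"
    using sr(3) by (auto intro!: derivative_eq_intros simp: field_simps sr(1,2))
  moreover have "sqrt r / 2 + (Re (fst p) * ?c + Im (fst p) * ?s) / 2
      = (?c * Re (fst (hmul p (gam r s))) - - ?s * Im (fst (hmul p (gam r s)))) / 2"
    using tcoord by (simp add: add_divide_distrib)
  ultimately show ?thesis
    by (simp add: has_vector_derivative_Pair has_real_derivative_iff_has_vector_derivative)
qed

lemma boxr_right_translate_gam:
  assumes f: "smooth f" and r: "r > 0"
  shows "((\<lambda>s. of_real (2 * sqrt r) * Tf f (hmul p (gam r s))) has_vector_derivative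
    boxr r (\<lambda>q. f (hmul q (gam r s))) p - subLap f (hmul p (gam r s))) (at s)"
proof -
  have "(cmod (fst (gam r s)))\<^sup>2 = r"
    using r sin_cos_squared_add[of "s / sqrt r"]
    by (simp add: cmod_power2 fst_gam power_mult_distrib flip: distrib_left)
  then have "boxr r (\<lambda>q. f (hmul q (gam r s))) p - subLap f (hmul p (gam r s))
      = of_real (2 * sqrt r) * (of_real (- sin (s / sqrt r)) * Xf (Tf f) (hmul p (gam r s))
          + of_real (cos (s / sqrt r)) * Yf (Tf f) (hmul p (gam r s)))"
    using boxr_right_translate[OF f, of "gam r s" p] by (simp add: fst_gam algebra_simps)
  moreover note C1_differentiable[OF C1_Tf[OF f]]
  ultimately show ?thesis
    using has_vector_derivative_horizontal[OF _ right_translate_gam_horizontal[OF r]]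
    by (simp add: has_vector_derivative_mult_right)
qed

lemma periodic_multiple:
  assumes "\<And>z t. f (z, t + c) = f (z, t)"
  shows "f (z, t + c * real n) = f (z, t)"
proof (induction n)
  case (Suc n)
  have "f (z, t + c * real (Suc n)) = f (z, (t + c * real n) + c)"
    by (simp add: algebra_simps)
  with assms Suc show ?case by simp
qed simp

lemma pdt_periodic:
  assumes d: "\<And>p. h differentiable (at p)" and per: "\<And>s. h (z, s + c) = h (z, s)"
  shows "pdt h (z, t + c) = pdt h (z, t)"
proof -
  have "((\<lambda>s. (z, s + c)) has_vector_derivative (Complex 0 0, 1)) (at t)"
    by (auto simp: zero_complex.ctr[symmetric] intro!: derivative_eq_intros)
  from has_vector_derivative_comp_partials[OF d this]
  have "((\<lambda>s. h (z, s)) has_vector_derivative pdt h (z, t + c)) (at t)"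
    using per by simp
  then show ?thesis
    using has_vector_derivative_pdt[OF d] vector_derivative_unique_at by blast
qed

lemma right_translate_gam_period:
  assumes "a > 0" "b > 0"
  shows "hmul p (gam (real a / real b) (2 * pi * sqrt (real a * real b)))
    = (fst (hmul p (gam (real a / real b) 0)), snd (hmul p (gam (real a / real b) 0)) + pi * real a)"
proof -
  have "sqrt (real a * real b) / sqrt (real a / real b) = real b"
    "sqrt (real a / real b) * sqrt (real a * real b) = real a"
    using assms by (simp_all add: real_sqrt_divide real_sqrt_mult field_simps)
  then have "2 * pi * sqrt (real a * real b) / sqrt (real a / real b) = 2 * pi * real b"
    "sqrt (real a / real b) * (2 * pi * sqrt (real a * real b)) / 2 = pi * real a"
    by (simp_all add: algebra_simps flip: times_divide_eq_right)
  moreover have "cis (2 * pi * real b) = 1"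
    by (rule cis_multiple_2pi) simp
  ultimately show ?thesis
    unfolding hmul_def gam_def by simp
qed

lemma boxr_minus_subLap_has_integral_0:
  assumes "a > 0" "b > 0" and f: "smooth f" and per: "\<And>z t. f (z, t + pi) = f (z, t)"
  defines "r \<equiv> real a / real b"
  shows "((\<lambda>s. boxr r (\<lambda>q. f (hmul q (gam r s))) p - subLap f (hmul p (gam r s))) has_integral 0)
    {0..2 * pi * sqrt (real a * real b)}"
proof -
  let ?\<gamma> = "\<lambda>s. hmul p (gam r s)" and ?L = "2 * pi * sqrt (real a * real b)"
  have r: "r > 0"
    using assms(1,2) by (simp add: r_def)
  have "?\<gamma> ?L = (fst (?\<gamma> 0), snd (?\<gamma> 0) + pi * real a)"
    unfolding r_def by (rule right_translate_gam_period[OF assms(1,2)])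
  moreover have "Tf f (z, t + pi * real a) = Tf f (z, t)" for z t
    unfolding Tf_def by (rule pdt_periodic[OF smooth_differentiable[OF f] periodic_multiple[OF per]])
  ultimately have "Tf f (?\<gamma> ?L) = Tf f (?\<gamma> 0)"
    by simp
  then show ?thesis
    using fundamental_theorem_of_calculus[of 0 ?L,
        OF _ has_vector_derivative_at_within[OF boxr_right_translate_gam[OF f r, where p = p]]]
    by simp
qed

theorem mainTheorem12:
  fixes a b :: nat and f :: "complex \<times> real \<Rightarrow> complex"
  assumes "a > 0" and "b > 0" and "coprime a b"
    and "schwartz_Hbar f"
  shows "Iop a b (subLap f) = boxr (real a / real b) (Iop a b f)"
proof
  fix p :: heis
  define r where "r = real a / real b"
  define L where "L = 2 * pi * sqrt (real a * real b)"
  have f: "smooth f" and per: "\<And>z t. f (z, t + pi) = f (z, t)"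
    using assms(4) unfolding schwartz_Hbar_def smooth_def by blast+
  have Iop: "Iop a b h = (\<lambda>q. integral {0..L} (\<lambda>s. h (hmul q (gam r s))))" for h
    by (simp add: fun_eq_iff Iop_def r_def L_def)
  have "((\<lambda>s. subLap f (hmul p (gam r s))) has_integral Iop a b (subLap f) p) {0..L}"
    unfolding Iop
    by (intro integrable_integral integrable_continuous_interval continuous_intros continuous_on_gam
        continuous_on_compose_UNIV[OF continuous_subLap[OF f]])
  from has_integral_add[OF boxr_minus_subLap_has_integral_0[OF assms(1,2) f per, where p = p]
      this[unfolded L_def]]
  have "((\<lambda>s. boxr r (\<lambda>q. f (hmul q (gam r s))) p) has_integral Iop a b (subLap f) p) {0..L}"
    by (simp add: r_def L_def)
  moreover have "boxr r (Iop a b f) p = integral {0..L} (\<lambda>s. boxr r (\<lambda>q. f (hmul q (gam r s))) p)"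
    unfolding Iop by (rule boxr_integral[OF C1_family_right_translates[OF f continuous_on_gam]])
  ultimately show "Iop a b (subLap f) p = boxr (real a / real b) (Iop a b f) p"
    by (simp add: r_def integral_unique)
qed

end
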